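(* For every integer $r\geq 1$, \[\sum_{\lambda\leq N}\rho_{r^2}(\lambda)\sim \frac{6}{\pi^2}\,N\log N \qquad (N\to\infty).\]
   Context: For integers $k\geq 0$ and $d\geq 1$, $\rho_k(d):=\#\{0\leq x<d:\ x^2\equiv k \pmod d\}$. The sum runs over positive integers $\lambda\le N$. *)

theory Defs
  imports "HOL-Analysis.Analysis" "HOL-Library.Landau_Symbols"
begin

definition rho :: "nat \<Rightarrow> nat \<Rightarrow> nat" where
  "rho k d = card {x. x < d \<and> x^2 mod d = k mod d}"

end

theory Submission
  imports Defs "HOL-Computational_Algebra.Squarefree" "HOL-Real_Asymp.Real_Asymp"
begin

(* Write x^2 = r^2 (mod d) as d | (x - r)(x + r). Sorting the solutions by a = gcd(d, x - r)
   and removing the coprimality of the cofactors by Moebius inversion leaves pairs of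
   congruences x = r (mod c a), x = -r (mod c b) with d = a c b, which by the Chinese remainder
   theorem have gcd(a, b) solutions when c gcd(a, b) | 2r and none otherwise. Summed over d <= N,
   this expresses the sum as a finite combination, over c, g <= 2r, of C(N / (c g^2)), where
   C(M) counts the coprime pairs (a, b) with a b <= M. The divisor problem gives
   #{a b <= M} ~ M log M; grouping pairs by their gcd turns this into C(M) ~ (6/pi^2) M log M,
   and the coefficients of the combination add up to 1, being a Moebius sum over the
   divisors of 2r. *)

definition hyperbola_pairs :: "nat \<Rightarrow> (nat \<times> nat) set" where
  "hyperbola_pairs n = Sigma {1..n} (\<lambda>a. {1..n div a})"

lemma finite_hyperbola_pairs [simp]: "finite (hyperbola_pairs n)"
  unfolding hyperbola_pairs_def by auto

lemma mem_hyperbola_pairs: "(a, b) \<in> hyperbola_pairs n \<longleftrightarrow> 1 \<le> a \<and> 1 \<le> b \<and> a * b \<le> n"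
proof -
  have "1 \<le> a \<Longrightarrow> b \<le> n div a \<longleftrightarrow> a * b \<le> n"
    by (simp add: less_eq_div_iff_mult_less_eq mult.commute)
  moreover have "1 \<le> b \<Longrightarrow> a * b \<le> n \<Longrightarrow> a \<le> n"
    by (metis dual_order.trans mult.right_neutral mult_le_mono2)
  ultimately show ?thesis unfolding hyperbola_pairs_def by auto
qed

lemma sum_hyperbola_pairs:
  fixes n :: nat
  shows "(\<Sum>(a, b)\<in>hyperbola_pairs n. f a b) = (\<Sum>a=1..n. \<Sum>b=1..n div a. f a b)"
  unfolding hyperbola_pairs_def by (rule sum.Sigma[symmetric]) auto

lemma sum_divisors_eq_sum_hyperbola:
  fixes n :: nat
  shows "(\<Sum>d=1..n. \<Sum>a | a dvd d. f a (d div a)) = (\<Sum>a=1..n. \<Sum>b=1..n div a. f a b)"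
proof -
  have "(\<Sum>d=1..n. \<Sum>a | a dvd d. f a (d div a)) = (\<Sum>(d, a)\<in>Sigma {1..n} (\<lambda>d. {a. a dvd d}). f a (d div a))"
    by (rule sum.Sigma) auto
  also have "\<dots> = (\<Sum>(a, b)\<in>hyperbola_pairs n. f a b)"
    by (rule sum.reindex_bij_witness[where i = "\<lambda>(a, b). (a * b, a)" and j = "\<lambda>(d, a). (a, d div a)"])
       (auto simp: mem_hyperbola_pairs Suc_le_eq elim!: dvdE)
  finally show ?thesis by (simp add: sum_hyperbola_pairs)
qed

lemma sum_hyperbola_swap:
  fixes n :: nat
  shows "(\<Sum>a=1..n. \<Sum>b=1..n div a. f a b) = (\<Sum>b=1..n. \<Sum>a=1..n div b. f a b)"
proof -
  have "(\<Sum>(a, b)\<in>hyperbola_pairs n. f a b) = (\<Sum>(b, a)\<in>hyperbola_pairs n. f a b)"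
    by (rule sum.reindex_bij_witness[where i = prod.swap and j = prod.swap])
       (auto simp: mem_hyperbola_pairs mult.commute)
  then show ?thesis by (simp add: sum_hyperbola_pairs[of f] sum_hyperbola_pairs[of "\<lambda>b a. f a b"])
qed

definition moebius :: "nat \<Rightarrow> int" where
  "moebius n = (if squarefree n then (-1) ^ card (prime_factors n) else 0)"

lemma abs_moebius_le: "\<bar>moebius n\<bar> \<le> 1"
  by (simp add: moebius_def)

lemma moebius_Suc_0 [simp]: "moebius (Suc 0) = 1"
  by (simp add: moebius_def)

lemma prod_subset_prime_factors_dvd:
  fixes n :: nat
  assumes "finite S" "S \<subseteq> prime_factors n"
  shows "\<Prod>S dvd n"
  using assms
proof (induction S rule: finite_induct)
  case empty
  then show ?case by simp
next
  case (insert p S)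
  have "coprime p (\<Prod>S)"
    using insert by (intro prod_coprime_right) (auto intro!: primes_coprime dest: in_prime_factors_imp_prime)
  with insert show ?case
    by (auto intro: divides_mult)
qed

lemma prime_factors_prod_primes:
  fixes S :: "nat set"
  assumes "finite S" "\<And>p. p \<in> S \<Longrightarrow> prime p"
  shows "prime_factors (\<Prod>S) = S"
proof -
  have "0 \<notin> S" using assms(2) by force
  then have "prime_factors (\<Prod>S) = \<Union> (prime_factors ` S)"
    using prime_factors_prod[of S id] assms(1) by simp
  also have "\<dots> = S" using assms by (auto simp: prime_prime_factors)
  finally show ?thesis .
qed

lemma prod_prime_factors_squarefree:
  fixes d :: nat
  assumes "squarefree d"
  shows "\<Prod>(prime_factors d) = d"
proof -
  have "d \<noteq> 0" using assms by (metis not_squarefree_0)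
  have "\<Prod>(prime_factors d) = (\<Prod>p\<in>prime_factors d. p ^ multiplicity p d)"
    using assms \<open>d \<noteq> 0\<close> by (intro prod.cong) (auto simp: squarefree_factorial_semiring')
  also have "\<dots> = d" using \<open>d \<noteq> 0\<close> by (simp add: prod_prime_factors gr0I)
  finally show ?thesis .
qed

lemma bij_betw_squarefree_divisors_prime_subsets:
  fixes n :: nat
  assumes "n > 0"
  shows "bij_betw prime_factors {d. d dvd n \<and> squarefree d} (Pow (prime_factors n))"
proof (rule bij_betw_byWitness[where f' = Prod])
  show "\<forall>X\<in>Pow (prime_factors n). prime_factors (\<Prod>X) = X"
    by (auto intro!: prime_factors_prod_primes intro: finite_subset)
  show "Prod ` Pow (prime_factors n) \<subseteq> {d. d dvd n \<and> squarefree d}"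
    by (auto intro!: prod_subset_prime_factors_dvd squarefree_prod_coprime
             intro: finite_subset primes_coprime squarefree_prime dest: in_prime_factors_imp_prime)
qed (use assms in \<open>auto simp: prod_prime_factors_squarefree prime_factors_dvd intro: dvd_trans\<close>)

lemma sum_Pow_minus_one_power_card:
  assumes "finite A"
  shows "(\<Sum>X\<in>Pow A. (-1::int) ^ card X) = (if A = {} then 1 else 0)"
proof -
  have "(\<Prod>x\<in>A. (1::int) - 1) = (\<Sum>X\<in>Pow A. (-1) ^ card X * (\<Prod>x\<in>X. 1) * (\<Prod>x\<in>A-X. 1))"
    by (rule prod_diff_conv_sum[OF assms])
  moreover have "A \<noteq> {} \<Longrightarrow> (0::int) ^ card A = 0" using assms by (simp add: card_gt_0_iff)
  ultimately show ?thesis using assms by auto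
qed

lemma sum_moebius_divisors:
  assumes "n > 0"
  shows "(\<Sum>d | d dvd n. moebius d) = (if n = 1 then 1 else 0)"
proof -
  have "(\<Sum>d | d dvd n. moebius d) = (\<Sum>d | d dvd n \<and> squarefree d. (-1) ^ card (prime_factors d))"
    using assms by (intro sum.mono_neutral_cong_right) (auto simp: moebius_def)
  also have "\<dots> = (\<Sum>X\<in>Pow (prime_factors n). (-1) ^ card X)"
    by (rule sum.reindex_bij_betw[OF bij_betw_squarefree_divisors_prime_subsets[OF assms]])
  also have "\<dots> = (if n = 1 then 1 else 0)"
    using assms by (simp add: sum_Pow_minus_one_power_card prime_factorization_empty_iff)
  finally show ?thesis .
qed

definition pair_count :: "nat \<Rightarrow> nat" where
  "pair_count n = card (hyperbola_pairs n)"

definition coprime_pair_count :: "nat \<Rightarrow> nat" where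
  "coprime_pair_count n = card {p \<in> hyperbola_pairs n. coprime (fst p) (snd p)}"

lemma pair_count_eq_sum_div: "pair_count n = (\<Sum>a=1..n. n div a)"
  unfolding pair_count_def hyperbola_pairs_def by (subst card_SigmaI) auto

lemma coprime_pair_count_le: "coprime_pair_count n \<le> pair_count n"
  unfolding coprime_pair_count_def pair_count_def by (rule card_mono) auto

lemma card_hyperbola_pairs_multiples:
  assumes "k \<ge> 1"
  shows "card {p \<in> hyperbola_pairs n. k dvd fst p \<and> k dvd snd p \<and> P (fst p div k) (snd p div k)}
       = card {p \<in> hyperbola_pairs (n div k^2). P (fst p) (snd p)}"
proof -
  have scale: "(k * x) * (k * y) \<le> n \<longleftrightarrow> x * y \<le> n div k^2" for x y
    using assms by (simp add: less_eq_div_iff_mult_less_eq power2_eq_square mult_ac)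
  have "bij_betw (\<lambda>(x, y). (k * x, k * y))
      {p \<in> hyperbola_pairs (n div k^2). P (fst p) (snd p)}
      {p \<in> hyperbola_pairs n. k dvd fst p \<and> k dvd snd p \<and> P (fst p div k) (snd p div k)}"
    by (rule bij_betw_byWitness[where f' = "\<lambda>(a, b). (a div k, b div k)"])
       (use assms in \<open>auto simp: mem_hyperbola_pairs scale elim!: dvdE\<close>)
  then show ?thesis by (rule bij_betw_same_card[symmetric])
qed

lemma card_hyperbola_pairs_common_multiples:
  "k \<ge> 1 \<Longrightarrow> card {p \<in> hyperbola_pairs n. k dvd fst p \<and> k dvd snd p} = pair_count (n div k^2)"
  using card_hyperbola_pairs_multiples[of k n "\<lambda>_ _. True"] by (simp add: pair_count_def)

lemma card_hyperbola_pairs_gcd_eq: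
  assumes "k \<ge> 1"
  shows "card {p \<in> hyperbola_pairs n. gcd (fst p) (snd p) = k} = coprime_pair_count (n div k^2)"
proof -
  have "gcd a b = k \<longleftrightarrow> k dvd a \<and> k dvd b \<and> coprime (a div k) (b div k)" for a b
  proof
    assume "gcd a b = k"
    then show "k dvd a \<and> k dvd b \<and> coprime (a div k) (b div k)"
      using assms by (metis div_gcd_coprime gcd_dvd1 gcd_dvd2 gcd_eq_0_iff not_one_le_zero)
  next
    assume "k dvd a \<and> k dvd b \<and> coprime (a div k) (b div k)"
    then show "gcd a b = k"
      using assms by (auto simp: gcd_mult_left coprime_iff_gcd_eq_1 elim!: dvdE)
  qed
  then show ?thesis
    using card_hyperbola_pairs_multiples[OF assms, of n coprime] by (simp add: coprime_pair_count_def)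
qed

lemma gcd_in_hyperbola_range:
  assumes "(a, b) \<in> hyperbola_pairs n"
  shows "gcd a b \<in> {1..n}"
proof -
  from assms have "1 \<le> a" "1 \<le> b" "a * b \<le> n" by (auto simp: mem_hyperbola_pairs)
  have "gcd a b \<le> a" using \<open>1 \<le> a\<close> by (simp add: gcd_le1_nat)
  also have "\<dots> \<le> a * b" using \<open>1 \<le> b\<close> by simp
  finally show ?thesis using \<open>1 \<le> a\<close> \<open>a * b \<le> n\<close> by (simp add: Suc_le_eq)
qed

lemma sum_hyperbola_pairs_gcd:
  fixes f :: "nat \<Rightarrow> 'a::comm_semiring_1"
  shows "(\<Sum>(a, b)\<in>hyperbola_pairs n. f (gcd a b))
       = (\<Sum>g=1..n. f g * of_nat (coprime_pair_count (n div g^2)))"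
proof -
  have "(\<Sum>(a, b)\<in>hyperbola_pairs n. f (gcd a b))
      = (\<Sum>g=1..n. \<Sum>p | p \<in> hyperbola_pairs n \<and> gcd (fst p) (snd p) = g. f (gcd (fst p) (snd p)))"
    unfolding case_prod_beta by (rule sum.group[symmetric]) (auto dest: gcd_in_hyperbola_range)
  also have "\<dots> = (\<Sum>g=1..n. f g * of_nat (coprime_pair_count (n div g^2)))"
    by (intro sum.cong refl) (simp add: card_hyperbola_pairs_gcd_eq[symmetric] mult.commute)
  finally show ?thesis .
qed

lemma pair_count_eq_sum_coprime_pair_count:
  "pair_count n = (\<Sum>g=1..n. coprime_pair_count (n div g^2))"
  using sum_hyperbola_pairs_gcd[of "\<lambda>_. 1::nat" n] by (simp add: pair_count_def)

lemma coprime_pair_count_eq_moebius_sum: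
  "int (coprime_pair_count n) = (\<Sum>k=1..n. moebius k * int (pair_count (n div k^2)))"
proof -
  have divisors_gcd: "{k \<in> {1..n}. k dvd gcd a b} = {k. k dvd gcd a b}" if "(a, b) \<in> hyperbola_pairs n" for a b
  proof -
    have "k \<in> {1..n}" if "k dvd gcd a b" for k
    proof -
      have "gcd a b \<in> {1..n}" using gcd_in_hyperbola_range[OF \<open>(a, b) \<in> hyperbola_pairs n\<close>] .
      moreover from this have "k \<le> gcd a b" using that by (intro dvd_imp_le) auto
      ultimately show ?thesis using that by (cases "k = 0") auto
    qed
    then show ?thesis by auto
  qed
  have "int (coprime_pair_count n) = (\<Sum>p\<in>hyperbola_pairs n. if coprime (fst p) (snd p) then 1 else 0)"
    by (simp add: coprime_pair_count_def sum.If_cases Int_def)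
  also have "\<dots> = (\<Sum>p\<in>hyperbola_pairs n. \<Sum>k | k \<in> {1..n} \<and> k dvd gcd (fst p) (snd p). moebius k)"
  proof (intro sum.cong refl)
    fix p assume p: "p \<in> hyperbola_pairs n"
    obtain a b where ab: "p = (a, b)" by (cases p)
    have "gcd a b > 0" using gcd_in_hyperbola_range p ab by fastforce
    then show "(if coprime (fst p) (snd p) then 1 else 0)
        = (\<Sum>k | k \<in> {1..n} \<and> k dvd gcd (fst p) (snd p). moebius k)"
      unfolding ab fst_conv snd_conv divisors_gcd[OF p[unfolded ab]]
      by (subst sum_moebius_divisors[OF \<open>gcd a b > 0\<close>]) (simp add: coprime_iff_gcd_eq_1)
  qed
  also have "\<dots> = (\<Sum>k=1..n. \<Sum>p | p \<in> hyperbola_pairs n \<and> k dvd gcd (fst p) (snd p). moebius k)"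
    by (rule sum.swap_restrict) auto
  also have "\<dots> = (\<Sum>k=1..n. moebius k * int (pair_count (n div k^2)))"
    by (intro sum.cong refl) (simp add: card_hyperbola_pairs_common_multiples mult.commute)
  finally show ?thesis .
qed

lemma card_residue_class_below:
  fixes L d j :: nat
  assumes "L dvd d" "j < L"
  shows "card {x. x < d \<and> x mod L = j} = d div L"
proof -
  have "bij_betw (\<lambda>q. q * L + j) {..<d div L} {x. x < d \<and> x mod L = j}"
  proof (rule bij_betw_byWitness[where f' = "\<lambda>x. x div L"])
    show "(\<lambda>q. q * L + j) ` {..<d div L} \<subseteq> {x. x < d \<and> x mod L = j}"
    proof clarify
      fix q assume "q < d div L"
      then have "Suc q * L \<le> d div L * L" by (intro mult_le_mono1) simp
      with assms show "q * L + j < d \<and> (q * L + j) mod L = j" by simp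
    qed
    show "(\<lambda>x. x div L) ` {x. x < d \<and> x mod L = j} \<subseteq> {..<d div L}"
      using assms by (auto intro!: less_mult_imp_div_less)
  qed (use assms in \<open>auto simp: div_mult_mod_eq[of _ L, symmetric]\<close>)
  then show ?thesis by (simp add: bij_betw_same_card[symmetric])
qed

lemma two_congruences_iff_lcm:
  fixes m1 m2 u v :: int
  assumes "gcd m1 m2 dvd u - v"
  obtains x0 where "\<And>x. m1 dvd x - u \<and> m2 dvd x - v \<longleftrightarrow> lcm m1 m2 dvd x - x0"
proof -
  obtain h where h: "u - v = gcd m1 m2 * h" using assms by (auto elim: dvdE)
  obtain s t where st: "s * m1 + t * m2 = gcd m1 m2" using bezout_int by blast
  define x0 where "x0 = u - s * m1 * h"
  have "x0 - u = m1 * (- s * h)" by (simp add: x0_def)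
  moreover have "x0 - v = m2 * (t * h)"
    unfolding x0_def using h st[symmetric] by (simp add: algebra_simps)
  ultimately have x0: "m1 dvd x0 - u" "m2 dvd x0 - v" by simp_all
  have shift: "m dvd x - y \<longleftrightarrow> m dvd x - z" if "m dvd z - y" for m x y z :: int
  proof -
    have "x - y = (x - z) + (z - y)" by simp
    then show ?thesis using that by (metis dvd_add_left_iff)
  qed
  show thesis
    by (rule that[of x0]) (simp add: shift[OF x0(1)] shift[OF x0(2)])
qed

lemma card_solutions_two_congruences:
  assumes "m1 dvd d" "m2 dvd d" "d > 0"
  shows "card {x. x < d \<and> int m1 dvd int x - u \<and> int m2 dvd int x - v}
       = (if int (gcd m1 m2) dvd u - v then d div lcm m1 m2 else 0)"
proof (cases "int (gcd m1 m2) dvd u - v")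
  case False
  have "int (gcd m1 m2) dvd (int x - v) - (int x - u)"
    if "int m1 dvd int x - u" "int m2 dvd int x - v" for x
    using that by (meson dvd_diff dvd_trans int_dvd_int_iff gcd_dvd1 gcd_dvd2)
  with False have "{x. x < d \<and> int m1 dvd int x - u \<and> int m2 dvd int x - v} = {}"
    by auto
  with False show ?thesis by simp
next
  case True
  define L where "L = lcm m1 m2"
  have "m1 \<noteq> 0" "m2 \<noteq> 0" using assms by auto
  then have "L > 0" "L dvd d"
    using assms by (simp_all add: L_def lcm_pos_nat)
  obtain x0 where x0: "\<And>x. int m1 dvd x - u \<and> int m2 dvd x - v \<longleftrightarrow> int L dvd x - x0"
    using two_congruences_iff_lcm[of "int m1" "int m2" u v] True
    by (auto simp: L_def gcd_int_int_eq lcm_int_int_eq)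
  have "int L dvd int x - x0 \<longleftrightarrow> x mod L = nat (x0 mod int L)" for x
    using \<open>L > 0\<close> by (auto simp: mod_eq_dvd_iff[symmetric] of_nat_mod[symmetric])
  then have "{x. x < d \<and> int m1 dvd int x - u \<and> int m2 dvd int x - v}
      = {x. x < d \<and> x mod L = nat (x0 mod int L)}"
    by (simp add: x0)
  with True \<open>L > 0\<close> \<open>L dvd d\<close> show ?thesis
    by (simp add: card_residue_class_below nat_less_iff L_def)
qed

lemma dvd_mult_iff_div_gcd_dvd:
  fixes d X Y :: int
  assumes "d \<noteq> 0"
  shows "d dvd X * Y \<longleftrightarrow> d div gcd d X dvd Y"
proof -
  define G where "G = gcd d X"
  have "G \<noteq> 0" using assms by (simp add: G_def)
  obtain d' X' where d': "d = G * d'" and X': "X = G * X'"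
    unfolding G_def by (meson dvdE gcd_dvd1 gcd_dvd2)
  have "coprime (d div G) (X div G)"
    unfolding G_def using assms by (intro div_gcd_coprime) simp
  then have "coprime d' X'" using \<open>G \<noteq> 0\<close> d' X' by simp
  have "d dvd X * Y \<longleftrightarrow> d' dvd X' * Y"
    using \<open>G \<noteq> 0\<close> d' X' by (simp add: mult.assoc)
  also have "\<dots> \<longleftrightarrow> d' dvd Y"
    using \<open>coprime d' X'\<close> by (simp add: coprime_dvd_mult_right_iff)
  moreover have "d div G = d'" using \<open>G \<noteq> 0\<close> d' by simp
  ultimately show ?thesis by (simp add: G_def)
qed

lemma moebius_sum_cofactor_dvd:
  fixes X :: int
  assumes "d > 0" "a dvd d"
  shows "(\<Sum>c | c dvd d div a. moebius c * (if int (c * a) dvd X then 1 else 0))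
       = (if int a = gcd (int d) X then 1 else 0)"
proof (cases "int a dvd X")
  case False
  then have "\<not> int (c * a) dvd X" for c by (metis dvd_mult_right of_nat_mult)
  moreover have "int a \<noteq> gcd (int d) X" using False by auto
  ultimately show ?thesis by simp
next
  case True
  define g where "g = nat (gcd (int d) X)"
  have g: "int g = gcd (int d) X" "g > 0" using assms by (simp_all add: g_def)
  then have "g dvd d" by (metis gcd_dvd1 int_dvd_int_iff)
  have "a > 0" using assms by (auto intro: Nat.gr0I)
  have "int a dvd int g" using assms True by (simp add: g)
  then have "a dvd g" by simp
  have cofactor_iff: "int c * int a dvd X \<longleftrightarrow> c dvd g div a" if "c dvd d div a" for c
  proof -
    have "int c * int a dvd X \<longleftrightarrow> c * a dvd d \<and> int (c * a) dvd X"
      using that assms \<open>a > 0\<close> by (simp add: dvd_div_iff_mult)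
    also have "\<dots> \<longleftrightarrow> c * a dvd g"
      by (simp flip: int_dvd_int_iff add: g)
    also have "\<dots> \<longleftrightarrow> c dvd g div a"
      using \<open>a dvd g\<close> \<open>a > 0\<close> by (simp add: dvd_div_iff_mult)
    finally show ?thesis .
  qed
  have "finite {c. c dvd d div a}"
    using assms by (intro finite_divisors_nat) (auto elim!: dvdE)
  moreover have "g div a dvd d div a"
    using \<open>a dvd g\<close> \<open>g dvd d\<close> assms(2) by simp
  ultimately have "(\<Sum>c | c dvd d div a. moebius c * (if int (c * a) dvd X then 1 else 0))
      = (\<Sum>c | c dvd g div a. moebius c)"
    using cofactor_iff by (intro sum.mono_neutral_cong_right) (auto intro: dvd_trans)
  also have "\<dots> = (if g div a = 1 then 1 else 0)"
    using \<open>a dvd g\<close> \<open>g > 0\<close> by (intro sum_moebius_divisors) (auto elim!: dvdE)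
  also have "g div a = 1 \<longleftrightarrow> int a = gcd (int d) X"
    using \<open>a dvd g\<close> \<open>g > 0\<close> g(1) by (auto elim!: dvdE)
  finally show ?thesis .
qed

text \<open>Only the divisor a = gcd d X contributes to the outer sum.\<close>
lemma dvd_mult_eq_moebius_sum:
  fixes X Y :: int
  assumes "d > 0"
  shows "(if int d dvd X * Y then 1 else 0)
       = (\<Sum>a | a dvd d. \<Sum>c | c dvd d div a.
            moebius c * (if int (c * a) dvd X \<and> int (d div a) dvd Y then 1 else 0))"
proof -
  define g where "g = nat (gcd (int d) X)"
  have g: "int g = gcd (int d) X" using assms by (simp add: g_def)
  then have "g dvd d" by (metis gcd_dvd1 int_dvd_int_iff)
  have split_indicator: "moebius c * (if P \<and> Q then 1 else 0)
      = (if Q then 1 else 0) * (moebius c * (if P then 1 else 0))" for c P Q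
    by simp
  have "(\<Sum>a | a dvd d. \<Sum>c | c dvd d div a.
            moebius c * (if int (c * a) dvd X \<and> int (d div a) dvd Y then 1 else 0))
      = (\<Sum>a | a dvd d. (if int (d div a) dvd Y then 1 else 0)
            * (\<Sum>c | c dvd d div a. moebius c * (if int (c * a) dvd X then 1 else 0)))"
    by (simp only: split_indicator sum_distrib_left)
  also have "\<dots> = (\<Sum>a | a dvd d. if a = g then (if int (d div a) dvd Y then 1 else 0) else 0)"
    using assms by (intro sum.cong refl) (simp add: moebius_sum_cofactor_dvd g[symmetric] del: of_nat_mult)
  also have "\<dots> = (if int (d div g) dvd Y then 1 else 0)"
    using assms \<open>g dvd d\<close> by (simp add: sum.delta)
  also have "int (d div g) dvd Y \<longleftrightarrow> int d dvd X * Y"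
    using dvd_mult_iff_div_gcd_dvd[of "int d" X Y] assms by (simp add: g[symmetric] zdiv_int)
  finally show ?thesis by simp
qed

text \<open>For d = a c b and g = gcd a b, root_weight r c g is the number of residues x mod d
  with c a | x - r and c b | x + r.\<close>
definition root_weight :: "nat \<Rightarrow> nat \<Rightarrow> nat \<Rightarrow> nat" where
  "root_weight r c g = (if c * g dvd 2 * r then g else 0)"

lemma card_solutions_factor_congruences:
  assumes "d = a * c * b" "d > 0"
  shows "card {x. x < d \<and> int (c * a) dvd int x - int r \<and> int (c * b) dvd int x + int r}
       = root_weight r c (gcd a b)"
proof -
  have "c * a dvd d" "c * b dvd d" using assms(1) by (simp_all add: mult_ac)
  have "d = gcd a b * (c * lcm a b)"
    using assms(1) prod_gcd_lcm_nat[of a b] by (simp add: mult_ac)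
  moreover have "c * lcm a b > 0" using assms by (simp add: lcm_pos_nat)
  ultimately have "d div lcm (c * a) (c * b) = gcd a b"
    by (simp add: lcm_mult_left)
  moreover have "int (gcd (c * a) (c * b)) dvd int r - - int r \<longleftrightarrow> c * gcd a b dvd 2 * r"
    by (simp add: gcd_mult_left flip: int_dvd_int_iff)
  ultimately show ?thesis
    using card_solutions_two_congruences[OF \<open>c * a dvd d\<close> \<open>c * b dvd d\<close> \<open>d > 0\<close>, of "int r" "- int r"]
    by (simp add: root_weight_def)
qed

lemma sum_indicator_lessThan:
  fixes d :: nat
  shows "(\<Sum>x<d. if P x then 1 else 0) = (of_nat (card {x. x < d \<and> P x}) :: 'a::semiring_1)"
  by (subst sum.inter_filter[symmetric]) auto

lemma rho_square_eq_moebius_sum: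
  assumes "d > 0"
  shows "int (rho (r^2) d)
       = (\<Sum>a | a dvd d. \<Sum>c | c dvd d div a. moebius c * int (root_weight r c (gcd a (d div a div c))))"
proof -
  have "x^2 mod d = r^2 mod d \<longleftrightarrow> int d dvd (int x - int r) * (int x + int r)" for x
  proof -
    have "x^2 mod d = r^2 mod d \<longleftrightarrow> int d dvd (int x)^2 - (int r)^2"
      by (simp flip: mod_eq_dvd_iff of_nat_mod of_nat_power)
    also have "(int x)^2 - (int r)^2 = (int x - int r) * (int x + int r)"
      by (simp add: algebra_simps power2_eq_square)
    finally show ?thesis .
  qed
  then have "int (rho (r^2) d) = (\<Sum>x<d. if int d dvd (int x - int r) * (int x + int r) then 1 else 0)"
    by (simp add: rho_def sum_indicator_lessThan)
  also have "\<dots> = (\<Sum>x<d. \<Sum>a | a dvd d. \<Sum>c | c dvd d div a. moebius c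
      * (if int (c * a) dvd int x - int r \<and> int (d div a) dvd int x + int r then 1 else 0))"
    using assms by (intro sum.cong refl dvd_mult_eq_moebius_sum)
  also have "\<dots> = (\<Sum>a | a dvd d. \<Sum>c | c dvd d div a. moebius c
      * (\<Sum>x<d. if int (c * a) dvd int x - int r \<and> int (d div a) dvd int x + int r then 1 else 0))"
    by (simp add: sum.swap[of _ "{..<d}"] sum_distrib_left)
  also have "\<dots> = (\<Sum>a | a dvd d. \<Sum>c | c dvd d div a. moebius c * int (root_weight r c (gcd a (d div a div c))))"
  proof (intro sum.cong refl arg_cong2[where f = "(*)"])
    fix a c assume "a \<in> {a. a dvd d}" "c \<in> {c. c dvd d div a}"
    then have "d div a = c * (d div a div c)" "d = a * c * (d div a div c)"
      by (simp_all add: mult.assoc)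
    then show "(\<Sum>x<d. if int (c * a) dvd int x - int r \<and> int (d div a) dvd int x + int r then 1 else 0)
        = int (root_weight r c (gcd a (d div a div c)))"
      using card_solutions_factor_congruences[of d a c "d div a div c" r] assms
      by (simp only: sum_indicator_lessThan)
  qed
  finally show ?thesis .
qed

lemma coprime_pair_count_0 [simp]: "coprime_pair_count 0 = 0"
  using coprime_pair_count_le[of 0] by (simp add: pair_count_eq_sum_div)

lemma sum_rho_square_eq_moebius_hyperbola:
  "(\<Sum>d=1..N. int (rho (r^2) d)) = (\<Sum>c=1..N. moebius c
      * (\<Sum>g=1..N div c. int (root_weight r c g) * int (coprime_pair_count (N div c div g^2))))"
proof -
  define F where "F a c b = moebius c * int (root_weight r c (gcd a b))" for a c b
  have div_commute: "N div a div c = N div c div a" for a c :: nat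
    by (metis div_mult2_eq mult.commute)
  have "(\<Sum>d=1..N. int (rho (r^2) d)) = (\<Sum>d=1..N. \<Sum>a | a dvd d. \<Sum>c | c dvd d div a. F a c (d div a div c))"
    by (intro sum.cong refl) (simp add: rho_square_eq_moebius_sum F_def)
  also have "\<dots> = (\<Sum>a=1..N. \<Sum>b=1..N div a. \<Sum>c | c dvd b. F a c (b div c))"
    by (rule sum_divisors_eq_sum_hyperbola)
  also have "\<dots> = (\<Sum>a=1..N. \<Sum>c=1..N div a. \<Sum>b=1..N div a div c. F a c b)"
    by (intro sum.cong refl sum_divisors_eq_sum_hyperbola)
  also have "\<dots> = (\<Sum>c=1..N. \<Sum>a=1..N div c. \<Sum>b=1..N div a div c. F a c b)"
    by (rule sum_hyperbola_swap)
  also have "\<dots> = (\<Sum>c=1..N. moebius c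
      * (\<Sum>(a, b)\<in>hyperbola_pairs (N div c). int (root_weight r c (gcd a b))))"
    by (simp add: F_def div_commute sum_hyperbola_pairs sum_distrib_left)
  also have "\<dots> = (\<Sum>c=1..N. moebius c
      * (\<Sum>g=1..N div c. int (root_weight r c g) * int (coprime_pair_count (N div c div g^2))))"
    by (simp add: sum_hyperbola_pairs_gcd[where f = "\<lambda>g. int (root_weight r c g)" for c])
  finally show ?thesis .
qed

lemma root_weight_eq_0:
  assumes "r \<ge> 1" "c \<ge> 1" "g \<ge> 1" "2 * r < c \<or> 2 * r < g"
  shows "root_weight r c g = 0"
proof -
  have "c \<le> c * g" "g \<le> c * g" using assms by simp_all
  then have "2 * r < c * g" using assms(4) by linarith
  then show ?thesis using assms(1) by (auto simp: root_weight_def dest: dvd_imp_le)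
qed

lemma sum_rho_square_eq_coprime_pair_counts:
  assumes "r \<ge> 1"
  shows "(\<Sum>d=1..N. int (rho (r^2) d)) = (\<Sum>c=1..2*r. \<Sum>g=1..2*r.
      moebius c * int (root_weight r c g) * int (coprime_pair_count (N div (c * g^2))))"
    (is "_ = (\<Sum>c=1..2*r. \<Sum>g=1..2*r. ?T c g)")
proof -
  have vanish: "?T c g = 0" if "c \<ge> 1" "g \<ge> 1" "\<not> (c \<le> 2 * r \<and> g \<le> 2 * r \<and> g \<le> N div c)" for c g
  proof (cases "c \<le> 2 * r \<and> g \<le> 2 * r")
    case True
    with that have "N div c < g * g" by (metis le_square leI order.strict_trans2)
    then have "N div (c * g^2) = 0" by (metis div_less div_mult2_eq power2_eq_square)
    then show ?thesis by simp
  next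
    case False
    then show ?thesis using root_weight_eq_0[OF assms that(1,2)] by auto
  qed
  have "(\<Sum>d=1..N. int (rho (r^2) d)) = (\<Sum>c=1..N. \<Sum>g=1..N div c. ?T c g)"
    unfolding sum_rho_square_eq_moebius_hyperbola by (simp add: sum_distrib_left div_mult2_eq mult.assoc)
  also have "\<dots> = (\<Sum>c=1..N. \<Sum>g=1..2*r. ?T c g)"
    using vanish by (intro sum.cong[OF refl] sum.mono_neutral_cong) auto
  also have "\<dots> = (\<Sum>c=1..2*r. \<Sum>g=1..2*r. ?T c g)"
  proof -
    have "(\<Sum>g=1..2*r. ?T c g) = 0" if "c \<ge> 1" "\<not> (c \<le> 2 * r \<and> c \<le> N)" for c
    proof -
      have "\<not> (c \<le> 2 * r \<and> 1 \<le> N div c)" using that by (auto simp: div_less)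
      then show ?thesis by (intro sum.neutral ballI vanish[OF that(1)]) auto
    qed
    then show ?thesis by (intro sum.mono_neutral_cong) auto
  qed
  finally show ?thesis .
qed

lemma sum_root_weight_div_eq_1:
  assumes "r \<ge> 1"
  shows "(\<Sum>c=1..2*r. \<Sum>g=1..2*r. of_int (moebius c) * real (root_weight r c g) / real (c * g^2)) = 1"
proof -
  define s where "s = 2 * r"
  define f where "f c g = (if c * g dvd s then of_int (moebius c) / real (c * g) else 0)" for c g
  have "s > 0" using assms by (simp add: s_def)
  have "(\<Sum>c=1..s. \<Sum>g=1..s. of_int (moebius c) * real (root_weight r c g) / real (c * g^2))
      = (\<Sum>c=1..s. \<Sum>g=1..s div c. f c g)"
  proof (rule sum.cong[OF refl], rule sum.mono_neutral_cong)
    fix c g assume "c \<in> {1..s}" "g \<in> {1..s} - {1..s div c}"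
    then have "s div c < g" "c > 0" by auto
    then have "s < c * g" by (simp add: div_less_iff_less_mult mult.commute)
    then show "of_int (moebius c) * real (root_weight r c g) / real (c * g^2) = 0"
      using \<open>s > 0\<close> by (auto simp: root_weight_def s_def dest: dvd_imp_le)
  qed (auto simp: f_def root_weight_def s_def power2_eq_square)
  also have "\<dots> = (\<Sum>m=1..s. \<Sum>c | c dvd m. f c (m div c))"
    by (rule sum_divisors_eq_sum_hyperbola[symmetric])
  also have "\<dots> = (\<Sum>m=1..s. if m = 1 then 1 else 0)"
  proof (intro sum.cong refl)
    fix m :: nat assume "m \<in> {1..s}"
    then have "(\<Sum>c | c dvd m. f c (m div c)) = (if m dvd s then of_int (\<Sum>c | c dvd m. moebius c) / real m else 0)"
      by (simp add: f_def sum_divide_distrib)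
    then show "(\<Sum>c | c dvd m. f c (m div c)) = (if m = 1 then 1 else 0)"
      using \<open>m \<in> {1..s}\<close> by (simp add: sum_moebius_divisors)
  qed
  also have "\<dots> = 1" using \<open>s > 0\<close> by simp
  finally show ?thesis by (simp add: s_def)
qed

lemma real_div_nat_ge:
  assumes "t \<ge> 1"
  shows "real n / real t - 1 \<le> real (n div t)"
proof -
  have "real n = real (n div t) * real t + real (n mod t)"
    by (metis of_nat_add of_nat_mult div_mult_mod_eq)
  moreover have "real (n mod t) < real t" using assms by simp
  ultimately have "real n < (real (n div t) + 1) * real t" by (simp add: algebra_simps)
  then show ?thesis using assms by (simp add: field_simps)
qed

lemma pair_count_bounds:
  assumes "n \<ge> 1"
  shows "real (pair_count n) \<le> real n * ln (real n) + real n"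
    and "real n * ln (real n) - real n \<le> real (pair_count n)"
proof -
  have count: "real (pair_count n) = (\<Sum>a=1..n. real (n div a))"
    by (simp add: pair_count_eq_sum_div)
  have harm: "real n * harm n = (\<Sum>a=1..n. real n / real a)"
    by (simp add: harm_def sum_distrib_left divide_inverse)
  have "real (pair_count n) \<le> real n * harm n"
    unfolding count harm by (intro sum_mono) (simp add: of_nat_div_le_of_nat)
  also have "\<dots> \<le> real n * (ln (real n) + 1)"
    using euler_mascheroni_sequence_decreasing[of 1 n] assms
    by (intro mult_left_mono) (simp_all add: harm_def)
  finally show "real (pair_count n) \<le> real n * ln (real n) + real n"
    by (simp add: algebra_simps)
  have "ln (real n) \<le> harm n"
    using harm_ge_ln[of n] assms by (meson order.trans ln_le_cancel_iff le_add_same_cancel1 of_nat_0_less_iff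
        zero_less_one_class.zero_le_one less_le_trans zero_less_one)
  then have "real n * ln (real n) \<le> real n * harm n"
    by (intro mult_left_mono) auto
  then have "real n * ln (real n) - real n \<le> (\<Sum>a=1..n. real n / real a - 1)"
    unfolding harm by (simp add: sum_subtractf)
  also have "\<dots> \<le> real (pair_count n)"
    unfolding count by (intro sum_mono real_div_nat_ge) simp
  finally show "real n * ln (real n) - real n \<le> real (pair_count n)" .
qed

lemma pair_count_le: "real (pair_count n) \<le> real n * (ln (real n) + 1)"
  using pair_count_bounds(1)[of n] by (cases "n = 0") (auto simp: algebra_simps pair_count_eq_sum_div)

lemma tendsto_pair_count: "(\<lambda>n. real (pair_count n) / (real n * ln (real n))) \<longlonglongrightarrow> 1"
proof (rule tendsto_sandwich[where f = "\<lambda>n. 1 - 1 / ln (real n)" and h = "\<lambda>n. 1 + 1 / ln (real n)"])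
  show "\<forall>\<^sub>F n in sequentially. 1 - 1 / ln (real n) \<le> real (pair_count n) / (real n * ln (real n))"
  proof (rule eventually_sequentiallyI[of 2])
    fix n :: nat assume "n \<ge> 2"
    then have "ln (real n) > 0" by simp
    then have "1 - 1 / ln (real n) = (real n * ln (real n) - real n) / (real n * ln (real n))"
      using \<open>n \<ge> 2\<close> by (simp add: field_simps)
    also have "\<dots> \<le> real (pair_count n) / (real n * ln (real n))"
      using pair_count_bounds(2)[of n] \<open>n \<ge> 2\<close> \<open>ln (real n) > 0\<close> by (intro divide_right_mono) auto
    finally show "1 - 1 / ln (real n) \<le> real (pair_count n) / (real n * ln (real n))" .
  qed
  show "\<forall>\<^sub>F n in sequentially. real (pair_count n) / (real n * ln (real n)) \<le> 1 + 1 / ln (real n)"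
  proof (rule eventually_sequentiallyI[of 2])
    fix n :: nat assume "n \<ge> 2"
    then have "ln (real n) > 0" by simp
    have "real (pair_count n) / (real n * ln (real n)) \<le> (real n * ln (real n) + real n) / (real n * ln (real n))"
      using pair_count_bounds(1)[of n] \<open>n \<ge> 2\<close> \<open>ln (real n) > 0\<close> by (intro divide_right_mono) auto
    also have "\<dots> = 1 + 1 / ln (real n)"
      using \<open>n \<ge> 2\<close> \<open>ln (real n) > 0\<close> by (simp add: field_simps)
    finally show "real (pair_count n) / (real n * ln (real n)) \<le> 1 + 1 / ln (real n)" .
  qed
qed real_asymp+

lemma ln_nat_ge_1:
  assumes "n \<ge> 3"
  shows "ln (real n) \<ge> 1"
proof -
  have "exp 1 \<le> real n" using exp_le assms by linarith
  then show ?thesis using assms by (subst ln_ge_iff) auto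
qed

lemma div_nat_bound_n_ln_n:
  fixes f :: "nat \<Rightarrow> real"
  assumes f: "\<And>m. \<bar>f m\<bar> \<le> real m * (ln (real m) + 1)" and "t \<ge> 1" "n \<ge> 3"
  shows "\<bar>f (n div t)\<bar> / (real n * ln (real n)) \<le> 2 / real t"
proof -
  define m where "m = n div t"
  have l: "ln (real n) \<ge> 1" using ln_nat_ge_1[OF \<open>n \<ge> 3\<close>] .
  have "\<bar>f m\<bar> \<le> real m * (ln (real n) + 1)"
  proof (cases "m = 0")
    case True
    then show ?thesis using f[of 0] by simp
  next
    case False
    then have "ln (real m) \<le> ln (real n)"
      using \<open>n \<ge> 3\<close> by (subst ln_le_cancel_iff) (auto simp: m_def)
    then have "real m * (ln (real m) + 1) \<le> real m * (ln (real n) + 1)"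
      by (intro mult_left_mono) auto
    then show ?thesis using f[of m] by linarith
  qed
  also have "\<dots> \<le> (real n / real t) * (2 * ln (real n))"
    using l by (intro mult_mono) (auto simp: m_def of_nat_div_le_of_nat)
  finally show ?thesis
    unfolding m_def using assms l by (simp add: field_simps)
qed

lemma tendsto_real_div_nat_ratio:
  assumes "t \<ge> 1"
  shows "(\<lambda>n. real (n div t) / real n) \<longlonglongrightarrow> 1 / real t"
proof (rule tendsto_sandwich[where f = "\<lambda>n. 1 / real t - 1 / real n" and h = "\<lambda>n. 1 / real t"])
  show "\<forall>\<^sub>F n in sequentially. 1 / real t - 1 / real n \<le> real (n div t) / real n"
  proof (rule eventually_sequentiallyI[of 1])
    fix n :: nat assume "n \<ge> 1"
    then have "1 / real t - 1 / real n = (real n / real t - 1) / real n" by (simp add: field_simps)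
    also have "\<dots> \<le> real (n div t) / real n"
      using real_div_nat_ge[OF assms, of n] by (intro divide_right_mono) auto
    finally show "1 / real t - 1 / real n \<le> real (n div t) / real n" .
  qed
  show "\<forall>\<^sub>F n in sequentially. real (n div t) / real n \<le> 1 / real t"
  proof (rule eventually_sequentiallyI[of 1])
    fix n :: nat assume "n \<ge> 1"
    have "real (n div t) / real n \<le> (real n / real t) / real n"
      by (intro divide_right_mono of_nat_div_le_of_nat) auto
    also have "\<dots> = 1 / real t" using \<open>n \<ge> 1\<close> by simp
    finally show "real (n div t) / real n \<le> 1 / real t" .
  qed
qed (real_asymp, simp)

lemma tendsto_ln_div_nat_ratio:
  assumes "t \<ge> 1"
  shows "(\<lambda>n. ln (real (n div t)) / ln (real n)) \<longlonglongrightarrow> 1"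
proof (rule tendsto_sandwich[where f = "\<lambda>n. 1 - ln (2 * real t) / ln (real n)" and h = "\<lambda>n. 1"])
  have n_large: "ln (real n) > 0" "n div t > 0" if "n \<ge> 2 * t" for n
    using that assms by (auto simp: less_eq_div_iff_mult_less_eq Suc_le_eq[symmetric])
  show "\<forall>\<^sub>F n in sequentially. 1 - ln (2 * real t) / ln (real n) \<le> ln (real (n div t)) / ln (real n)"
  proof (rule eventually_sequentiallyI[of "2 * t"])
    fix n :: nat assume n: "n \<ge> 2 * t"
    have "real n / real t \<ge> 2" using n assms by (simp add: field_simps)
    then have "real n / (2 * real t) \<le> real (n div t)"
      using real_div_nat_ge[OF assms, of n] assms by (simp add: field_simps)
    moreover have "real n / (2 * real t) > 0" using n assms by simp
    ultimately have "ln (real n / (2 * real t)) \<le> ln (real (n div t))"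
      by simp
    then have "ln (real n) - ln (2 * real t) \<le> ln (real (n div t))"
      using n assms by (simp add: ln_div)
    then have "(ln (real n) - ln (2 * real t)) / ln (real n) \<le> ln (real (n div t)) / ln (real n)"
      using n_large[OF n] by (intro divide_right_mono) auto
    then show "1 - ln (2 * real t) / ln (real n) \<le> ln (real (n div t)) / ln (real n)"
      using n_large[OF n] by (simp add: diff_divide_distrib)
  qed
  show "\<forall>\<^sub>F n in sequentially. ln (real (n div t)) / ln (real n) \<le> 1"
  proof (rule eventually_sequentiallyI[of "2 * t"])
    fix n :: nat assume n: "n \<ge> 2 * t"
    have "ln (real (n div t)) \<le> ln (real n)"
      using n_large[OF n] n assms by (subst ln_le_cancel_iff) auto
    then show "ln (real (n div t)) / ln (real n) \<le> 1" using n_large[OF n] by simp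
  qed
qed (real_asymp, simp)

lemma tendsto_div_nat_n_ln_n:
  fixes f :: "nat \<Rightarrow> real"
  assumes lim: "(\<lambda>n. f n / (real n * ln (real n))) \<longlonglongrightarrow> L" and "t \<ge> 1"
  shows "(\<lambda>n. f (n div t) / (real n * ln (real n))) \<longlonglongrightarrow> L / real t"
proof -
  have "(\<lambda>n. f (n div t) / (real (n div t) * ln (real (n div t)))) \<longlonglongrightarrow> L"
    using filterlim_compose[OF lim filterlim_at_top_div_const_nat] \<open>t \<ge> 1\<close> by simp
  then have "(\<lambda>n. f (n div t) / (real (n div t) * ln (real (n div t))) * (real (n div t) / real n)
      * (ln (real (n div t)) / ln (real n))) \<longlonglongrightarrow> L * (1 / real t) * 1"
    using assms by (intro tendsto_mult tendsto_real_div_nat_ratio tendsto_ln_div_nat_ratio)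
  then have "(\<lambda>n. f (n div t) / (real (n div t) * ln (real (n div t))) * (real (n div t) / real n)
      * (ln (real (n div t)) / ln (real n))) \<longlonglongrightarrow> L / real t"
    by simp
  then show ?thesis
  proof (rule Lim_transform_eventually)
    show "\<forall>\<^sub>F n in sequentially. f (n div t) / (real (n div t) * ln (real (n div t))) * (real (n div t) / real n)
        * (ln (real (n div t)) / ln (real n)) = f (n div t) / (real n * ln (real n))"
    proof (rule eventually_sequentiallyI[of "2 * t"])
      fix n :: nat assume n: "n \<ge> 2 * t"
      then have "n div t \<ge> 2" using \<open>t \<ge> 1\<close> by (simp add: less_eq_div_iff_mult_less_eq mult.commute)
      then have "ln (real (n div t)) > 0" "ln (real n) > 0" "real (n div t) > 0" "real n > 0"
        using n \<open>t \<ge> 1\<close> by auto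
      then show "f (n div t) / (real (n div t) * ln (real (n div t))) * (real (n div t) / real n)
          * (ln (real (n div t)) / ln (real n)) = f (n div t) / (real n * ln (real n))"
        by (simp add: field_simps)
    qed
  qed
qed

lemma inverse_squares_sums_nat: "(\<lambda>k::nat. 1 / real k ^ 2) sums (pi^2 / 6)"
  using inverse_squares_sums sums_Suc_iff[of "\<lambda>k::nat. 1 / real k ^ 2"] by simp

text \<open>The growth bound on f makes 2 / k^2 a dominating sequence for Tannery's theorem.\<close>
lemma tendsto_sum_div_squares:
  fixes f w :: "nat \<Rightarrow> real"
  assumes lim: "(\<lambda>n. f n / (real n * ln (real n))) \<longlonglongrightarrow> L"
    and f_bound: "\<And>m. \<bar>f m\<bar> \<le> real m * (ln (real m) + 1)"
    and w_bound: "\<And>k. \<bar>w k\<bar> \<le> 1"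
  shows "(\<lambda>n. (\<Sum>k=1..n. w k * f (n div k^2)) / (real n * ln (real n))) \<longlonglongrightarrow> (\<Sum>k. w k * L / real k ^ 2)"
proof -
  have "f 0 = 0" using f_bound[of 0] by simp
  define a where "a k n = w k * (f (n div k^2) / (real n * ln (real n)))" for k n
  have "(\<lambda>n. suminf (\<lambda>k. a k n)) \<longlonglongrightarrow> (\<Sum>k. w k * L / real k ^ 2)"
  proof (rule tannerys_theorem[THEN conjunct2, THEN conjunct2])
    fix k
    show "(\<lambda>n. a k n) \<longlonglongrightarrow> w k * L / real k ^ 2"
    proof (cases "k = 0")
      case True
      then show ?thesis by (simp add: a_def \<open>f 0 = 0\<close>)
    next
      case False
      then have "(\<lambda>n. a k n) \<longlonglongrightarrow> w k * (L / real (k^2))"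
        unfolding a_def by (intro tendsto_mult_left tendsto_div_nat_n_ln_n[OF lim]) (simp add: Suc_le_eq)
      then show ?thesis by simp
    qed
  next
    show "\<forall>\<^sub>F (k, n) in at_top \<times>\<^sub>F sequentially. norm (a k n) \<le> 2 / real k ^ 2"
      unfolding eventually_prod_sequentially
    proof (intro exI[of _ 3] allI impI)
      fix k n :: nat assume "n \<ge> 3" "k \<ge> 3"
      then have "k^2 \<ge> 1" by (simp add: Suc_le_eq)
      have "norm (a k n) = \<bar>w k\<bar> * (\<bar>f (n div k^2)\<bar> / (real n * ln (real n)))"
        unfolding a_def using ln_nat_ge_1[OF \<open>n \<ge> 3\<close>] by (simp add: abs_mult)
      also have "\<dots> \<le> 1 * (2 / real (k^2))"
        using div_nat_bound_n_ln_n[OF f_bound \<open>k^2 \<ge> 1\<close> \<open>n \<ge> 3\<close>] w_bound[of k] ln_nat_ge_1[OF \<open>n \<ge> 3\<close>]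
        by (intro mult_mono) auto
      finally show "case (k, n) of (k, n) \<Rightarrow> norm (a k n) \<le> 2 / real k ^ 2" by simp
    qed
  next
    show "summable (\<lambda>k::nat. 2 / real k ^ 2)"
      using summable_mult[OF sums_summable[OF inverse_squares_sums_nat], of 2] by simp
  qed simp
  moreover have "suminf (\<lambda>k. a k n) = (\<Sum>k=1..n. w k * f (n div k^2)) / (real n * ln (real n))" for n
  proof -
    have "n div k^2 = 0" if "k > n" for k
      using that by (simp add: div_less power2_eq_square less_le_trans[OF _ le_square])
    then have "suminf (\<lambda>k. a k n) = (\<Sum>k=1..n. a k n)"
      by (intro suminf_finite) (auto simp: a_def \<open>f 0 = 0\<close> not_le Suc_le_eq)
    then show ?thesis by (simp add: a_def sum_divide_distrib)
  qed
  ultimately show ?thesis by simp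
qed

lemma tendsto_coprime_pair_count_moebius:
  "(\<lambda>n. real (coprime_pair_count n) / (real n * ln (real n)))
     \<longlonglongrightarrow> (\<Sum>k. of_int (moebius k) / real k ^ 2)"
proof -
  have "\<bar>real_of_int (moebius k)\<bar> \<le> 1" for k
    by (metis abs_moebius_le of_int_abs of_int_le_1_iff)
  then have "(\<lambda>n. (\<Sum>k=1..n. of_int (moebius k) * real (pair_count (n div k^2))) / (real n * ln (real n)))
      \<longlonglongrightarrow> (\<Sum>k. of_int (moebius k) * 1 / real k ^ 2)"
    using pair_count_le by (intro tendsto_sum_div_squares[OF tendsto_pair_count]) auto
  moreover have "real (coprime_pair_count n) = (\<Sum>k=1..n. of_int (moebius k) * real (pair_count (n div k^2)))" for n
    using arg_cong[OF coprime_pair_count_eq_moebius_sum, of real_of_int] by simp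
  ultimately show ?thesis by simp
qed

text \<open>The constant is identified without computing the Dirichlet series of the Moebius function:
  inverting the relation between the two counts once more and comparing with the divisor
  problem forces it to be the reciprocal of zeta(2).\<close>
lemma suminf_moebius_div_squares: "(\<Sum>k. of_int (moebius k) / real k ^ 2) = 6 / pi^2"
proof -
  define M where "M = (\<Sum>k. of_int (moebius k) / real k ^ 2)"
  have bound: "\<bar>real (coprime_pair_count m)\<bar> \<le> real m * (ln (real m) + 1)" for m
    using coprime_pair_count_le[of m] pair_count_le[of m] by simp
  have count: "real (pair_count n) = (\<Sum>k=1..n. 1 * real (coprime_pair_count (n div k^2)))" for n
    by (simp add: pair_count_eq_sum_coprime_pair_count)
  have "(\<lambda>n. real (pair_count n) / (real n * ln (real n))) \<longlonglongrightarrow> (\<Sum>k. 1 * M / real k ^ 2)"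
    unfolding count using bound
    by (intro tendsto_sum_div_squares[OF tendsto_coprime_pair_count_moebius[folded M_def]]) auto
  moreover have "(\<Sum>k. 1 * M / real k ^ 2) = M * (pi^2 / 6)"
    using sums_unique[OF sums_mult[OF inverse_squares_sums_nat, of M]] by simp
  ultimately have "M * (pi^2 / 6) = 1" using tendsto_pair_count by (metis LIMSEQ_unique)
  then show ?thesis by (simp add: M_def field_simps)
qed

lemma tendsto_coprime_pair_count:
  "(\<lambda>n. real (coprime_pair_count n) / (real n * ln (real n))) \<longlonglongrightarrow> 6 / pi^2"
  using tendsto_coprime_pair_count_moebius by (simp add: suminf_moebius_div_squares)

lemma tendsto_sum_rho_square:
  assumes "r \<ge> 1"
  shows "(\<lambda>N. real (\<Sum>l=1..N. rho (r^2) l) / (real N * ln (real N))) \<longlonglongrightarrow> 6 / pi^2"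
proof -
  define w where "w c g = real_of_int (moebius c) * real (root_weight r c g)" for c g
  have "real (\<Sum>l=1..N. rho (r^2) l) / (real N * ln (real N))
      = (\<Sum>c=1..2*r. \<Sum>g=1..2*r. w c g * (real (coprime_pair_count (N div (c * g^2))) / (real N * ln (real N))))" for N
    using arg_cong[OF sum_rho_square_eq_coprime_pair_counts[OF assms, of N], of real_of_int]
    by (simp add: w_def sum_divide_distrib)
  moreover have "(\<lambda>N. \<Sum>c=1..2*r. \<Sum>g=1..2*r. w c g * (real (coprime_pair_count (N div (c * g^2))) / (real N * ln (real N))))
      \<longlonglongrightarrow> (\<Sum>c=1..2*r. \<Sum>g=1..2*r. w c g * (6 / pi^2 / real (c * g^2)))"
    by (intro tendsto_sum tendsto_mult_left tendsto_div_nat_n_ln_n[OF tendsto_coprime_pair_count])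
       (auto simp: Suc_le_eq)
  moreover have "(\<Sum>c=1..2*r. \<Sum>g=1..2*r. w c g * (6 / pi^2 / real (c * g^2))) = 6 / pi^2"
  proof -
    have "(\<Sum>c=1..2*r. \<Sum>g=1..2*r. w c g * (6 / pi^2 / real (c * g^2)))
        = 6 / pi^2 * (\<Sum>c=1..2*r. \<Sum>g=1..2*r. of_int (moebius c) * real (root_weight r c g) / real (c * g^2))"
      unfolding sum_distrib_left by (intro sum.cong refl) (simp add: w_def field_simps)
    then show ?thesis using sum_root_weight_div_eq_1[OF assms] by simp
  qed
  ultimately show ?thesis by simp
qed

theorem theorem1:
  fixes r :: nat
  assumes "r \<ge> 1"
  shows "(\<lambda>N::nat. real (\<Sum>l=1..N. rho (r^2) l))
           \<sim>[at_top] (\<lambda>N. 6 / pi^2 * real N * ln (real N))"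
proof -
  have "(\<lambda>N. real (\<Sum>l=1..N. rho (r^2) l) / (real N * ln (real N)) / (6 / pi^2)) \<longlonglongrightarrow> (6 / pi^2) / (6 / pi^2)"
    by (intro tendsto_divide tendsto_sum_rho_square[OF assms]) auto
  then have "(\<lambda>N. real (\<Sum>l=1..N. rho (r^2) l) / (6 / pi^2 * real N * ln (real N))) \<longlonglongrightarrow> 1"
    by (simp add: field_simps)
  then show ?thesis by (rule asymp_equivI')
qed

end
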